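(* For a time step $\Delta t>0$, the matrix $$\mathbf{P}=\begin{bmatrix}D_V''&-\frac{\Delta t}{2\hbar}H\\-\frac{\Delta t}{2\hbar}H&D_V''\end{bmatrix}$$ is positive definite if and only if $$\Delta t<\Delta t_{\mathrm{CFL,gen}}=\frac{2}{\rho\!\left(\frac{1}{\hbar}(D_V'')^{-1/2}H(D_V'')^{-1/2}\right)},$$ where $\rho(\cdot)$ is the spectral radius.
   Context: Fix constants $\hbar>0$, $m>0$, cell sizes $\Delta x,\Delta y,\Delta z>0$ and positive integers $n_x,n_y,n_z$. The region is a box of $n_x\times n_y\times n_z$ primary cells of size $\Delta x\times\Delta y\times\Delta z$ with primary nodes $(i,j,k)$, $1\le i\le n_x+1$, $1\le j\le n_y+1$, $1\le k\le n_z+1$. Let $N=(n_x+1)(n_y+1)(n_z+1)$; node-indexed vectors use the ordering $i+(j-1)(n_x+1)+(k-1)(n_x+1)(n_y+1)$. Real potential values $U_{i,j,k}$ are given at the nodes; $D_U$ is the $N\times N$ diagonal matrix containing them. Let $I_p$ be the $p\times p$ identity, $\tilde I_p=\mathrm{diag}(\tfrac12,1,\dots,1,\tfrac12)$ ($p\times p$), $W_p=[0_{p\times1}\ I_p]-[I_p\ 0_{p\times 1}]$ ($p\times(p+1)$), $\otimes$ the Kronecker product. Define $D_V''=\Delta x\Delta y\Delta z\,\tilde I_{n_z+1}\otimes\tilde I_{n_y+1}\otimes\tilde I_{n_x+1}$; $D=[D_x\ D_y\ D_z]$ with $D_x=-I_{n_z+1}\otimes I_{n_y+1}\otimes W_{n_x}^T$,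 $D_y=-I_{n_z+1}\otimes W_{n_y}^T\otimes I_{n_x+1}$, $D_z=-W_{n_z}^T\otimes I_{n_y+1}\otimes I_{n_x+1}$; $D_S''=\mathrm{diag}(\Delta y\Delta z\,\tilde I_{n_z+1}\otimes\tilde I_{n_y+1}\otimes I_{n_x},\ \Delta x\Delta z\,\tilde I_{n_z+1}\otimes I_{n_y}\otimes\tilde I_{n_x+1},\ \Delta x\Delta y\,I_{n_z}\otimes\tilde I_{n_y+1}\otimes\tilde I_{n_x+1})$; $D_l'=\mathrm{diag}(\Delta x\, I_{n_x(n_y+1)(n_z+1)},\ \Delta y\, I_{(n_x+1)n_y(n_z+1)},\ \Delta z\, I_{(n_x+1)(n_y+1)n_z})$; $H=\frac{\hbar^2}{2m}D D_S''(D_l')^{-1}D^T+D_V''D_U$. *)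

theory Defs
  imports "Jordan_Normal_Form.Spectral_Radius"
begin

(* All matrices are Jordan_Normal_Form matrices ('a mat), indexed from 0.
   Node (i,j,k) (1-based, as in the paper) has 0-based vector index
   (i-1) + (j-1)(nx+1) + (k-1)(nx+1)(ny+1). *)

definition kron :: "real mat \<Rightarrow> real mat \<Rightarrow> real mat" where
  "kron A B = mat (dim_row A * dim_row B) (dim_col A * dim_col B)
     (\<lambda>(i,j). A $$ (i div dim_row B, j div dim_col B) * B $$ (i mod dim_row B, j mod dim_col B))"

definition hcat :: "real mat \<Rightarrow> real mat \<Rightarrow> real mat" where
  "hcat A B = mat (dim_row A) (dim_col A + dim_col B)
     (\<lambda>(i,j). if j < dim_col A then A $$ (i,j) else B $$ (i, j - dim_col A))"

definition Itilde :: "nat \<Rightarrow> real mat" where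
  "Itilde p = mat p p (\<lambda>(i,j). if i = j then (if i = 0 \<or> i = p - 1 then 1/2 else 1) else 0)"

definition Wm :: "nat \<Rightarrow> real mat" where
  "Wm p = mat p (p+1) (\<lambda>(i,j). (if j = i + 1 then 1 else 0) - (if j = i then 1 else 0))"

definition DV :: "real \<Rightarrow> real \<Rightarrow> real \<Rightarrow> nat \<Rightarrow> nat \<Rightarrow> nat \<Rightarrow> real mat" where
  "DV dx dy dz nx ny nz = (dx*dy*dz) \<cdot>\<^sub>m kron (Itilde (nz+1)) (kron (Itilde (ny+1)) (Itilde (nx+1)))"

definition Dx :: "nat \<Rightarrow> nat \<Rightarrow> nat \<Rightarrow> real mat" where
  "Dx nx ny nz = - kron (1\<^sub>m (nz+1)) (kron (1\<^sub>m (ny+1)) ((Wm nx)\<^sup>T))"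
definition Dy :: "nat \<Rightarrow> nat \<Rightarrow> nat \<Rightarrow> real mat" where
  "Dy nx ny nz = - kron (1\<^sub>m (nz+1)) (kron ((Wm ny)\<^sup>T) (1\<^sub>m (nx+1)))"
definition Dz :: "nat \<Rightarrow> nat \<Rightarrow> nat \<Rightarrow> real mat" where
  "Dz nx ny nz = - kron ((Wm nz)\<^sup>T) (kron (1\<^sub>m (ny+1)) (1\<^sub>m (nx+1)))"

definition Dmat :: "nat \<Rightarrow> nat \<Rightarrow> nat \<Rightarrow> real mat" where
  "Dmat nx ny nz = hcat (Dx nx ny nz) (hcat (Dy nx ny nz) (Dz nx ny nz))"

definition DS :: "real \<Rightarrow> real \<Rightarrow> real \<Rightarrow> nat \<Rightarrow> nat \<Rightarrow> nat \<Rightarrow> real mat" where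
  "DS dx dy dz nx ny nz = diag_block_mat
     [(dy*dz) \<cdot>\<^sub>m kron (Itilde (nz+1)) (kron (Itilde (ny+1)) (1\<^sub>m nx)),
      (dx*dz) \<cdot>\<^sub>m kron (Itilde (nz+1)) (kron (1\<^sub>m ny) (Itilde (nx+1))),
      (dx*dy) \<cdot>\<^sub>m kron (1\<^sub>m nz) (kron (Itilde (ny+1)) (Itilde (nx+1)))]"

definition Dl :: "real \<Rightarrow> real \<Rightarrow> real \<Rightarrow> nat \<Rightarrow> nat \<Rightarrow> nat \<Rightarrow> real mat" where
  "Dl dx dy dz nx ny nz = diag_block_mat
     [dx \<cdot>\<^sub>m 1\<^sub>m (nx*(ny+1)*(nz+1)), dy \<cdot>\<^sub>m 1\<^sub>m ((nx+1)*ny*(nz+1)), dz \<cdot>\<^sub>m 1\<^sub>m ((nx+1)*(ny+1)*nz)]"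

definition mat_inv :: "real mat \<Rightarrow> real mat" where
  "mat_inv A = (THE B. B \<in> carrier_mat (dim_row A) (dim_row A) \<and> inverts_mat A B \<and> inverts_mat B A)"

definition DU :: "(nat \<Rightarrow> nat \<Rightarrow> nat \<Rightarrow> real) \<Rightarrow> nat \<Rightarrow> nat \<Rightarrow> nat \<Rightarrow> real mat" where
  "DU U nx ny nz = mat ((nx+1)*(ny+1)*(nz+1)) ((nx+1)*(ny+1)*(nz+1))
     (\<lambda>(l,l'). if l = l' then U (l mod (nx+1) + 1) ((l div (nx+1)) mod (ny+1) + 1) (l div ((nx+1)*(ny+1)) + 1) else 0)"

definition Hmat :: "real \<Rightarrow> real \<Rightarrow> real \<Rightarrow> real \<Rightarrow> real \<Rightarrow> nat \<Rightarrow> nat \<Rightarrow> nat \<Rightarrow> (nat \<Rightarrow> nat \<Rightarrow> nat \<Rightarrow> real) \<Rightarrow> real mat" where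
  "Hmat hbar m dx dy dz nx ny nz U =
     (hbar^2 / (2*m)) \<cdot>\<^sub>m (Dmat nx ny nz * DS dx dy dz nx ny nz * mat_inv (Dl dx dy dz nx ny nz) * (Dmat nx ny nz)\<^sup>T)
     + DV dx dy dz nx ny nz * DU U nx ny nz"

definition diag_inv_sqrt :: "real mat \<Rightarrow> real mat" where
  "diag_inv_sqrt A = mat (dim_row A) (dim_col A) (\<lambda>(i,j). if i = j then 1 / sqrt (A $$ (i,i)) else 0)"

definition pos_def :: "real mat \<Rightarrow> bool" where
  "pos_def A \<longleftrightarrow> A \<in> carrier_mat (dim_row A) (dim_row A) \<and> A\<^sup>T = A \<and>
     (\<forall>v \<in> carrier_vec (dim_row A). v \<noteq> 0\<^sub>v (dim_row A) \<longrightarrow> v \<bullet> (A *\<^sub>v v) > 0)"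

definition Pmat :: "real \<Rightarrow> real \<Rightarrow> real \<Rightarrow> real \<Rightarrow> real \<Rightarrow> real \<Rightarrow> nat \<Rightarrow> nat \<Rightarrow> nat \<Rightarrow> (nat \<Rightarrow> nat \<Rightarrow> nat \<Rightarrow> real) \<Rightarrow> real mat" where
  "Pmat dt hbar m dx dy dz nx ny nz U =
     (let H = Hmat hbar m dx dy dz nx ny nz U; V = DV dx dy dz nx ny nz;
          B = (- (dt / (2*hbar))) \<cdot>\<^sub>m H
      in four_block_mat V B B V)"

definition dt_CFL :: "real \<Rightarrow> real \<Rightarrow> real \<Rightarrow> real \<Rightarrow> real \<Rightarrow> nat \<Rightarrow> nat \<Rightarrow> nat \<Rightarrow> (nat \<Rightarrow> nat \<Rightarrow> nat \<Rightarrow> real) \<Rightarrow> real" where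
  "dt_CFL hbar m dx dy dz nx ny nz U =
     (let S = diag_inv_sqrt (DV dx dy dz nx ny nz);
          M = (1/hbar) \<cdot>\<^sub>m (S * Hmat hbar m dx dy dz nx ny nz U * S)
      in 2 / spectral_radius (map_mat complex_of_real M))"

end

(* Write V = D_V'', S = V^(-1/2) and M = S H S. Substituting x = S a, y = S b turns the quadratic
   form of P into |a|^2 + |b|^2 - (dt/hbar) a^T M b. For the real symmetric matrix M one has
   |a^T M b| <= rho(M) (|a|^2 + |b|^2) / 2, with equality for a = u, b = +-u where u is a real
   eigenvector for an eigenvalue of modulus rho(M); hence P is positive definite iff
   dt rho(M) < 2 hbar. The bound |x^T M x| <= rho(M) |x|^2 needs no spectral theorem: for
   r > rho(M) the powers of M/r stay bounded, whereas Cauchy-Schwarz gives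
   (x^T A x)^(2^j) <= |x|^(2^(j+1) - 2) x^T A^(2^j) x for symmetric A. Finally rho(M) > 0 because
   the first two nodes share an edge, so H has a nonzero off-diagonal entry. *)

theory Submission
  imports Defs
begin

section \<open>Bilinear forms of real matrices\<close>

lemma dim_mat_diag [simp]: "dim_row (mat_diag n d) = n" "dim_col (mat_diag n d) = n"
  unfolding mat_diag_def by simp_all

lemma index_mat_diag [simp]: "i < n \<Longrightarrow> j < n \<Longrightarrow> mat_diag n d $$ (i,j) = (if i = j then d i else 0)"
  unfolding mat_diag_def by simp

definition bilinear_form :: "real mat \<Rightarrow> nat \<Rightarrow> (nat \<Rightarrow> real) \<Rightarrow> (nat \<Rightarrow> real) \<Rightarrow> real" where
  "bilinear_form A n x y = (\<Sum>i\<in>{0..<n}. \<Sum>j\<in>{0..<n}. x i * A $$ (i,j) * y j)"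

definition sum_sq :: "nat \<Rightarrow> (nat \<Rightarrow> real) \<Rightarrow> real" where
  "sum_sq n x = (\<Sum>i\<in>{0..<n}. (x i)\<^sup>2)"

lemma sum_sq_nonneg: "0 \<le> sum_sq n x"
  unfolding sum_sq_def by (simp add: sum_nonneg)

lemma sum_sq_pos: "i < n \<Longrightarrow> x i \<noteq> 0 \<Longrightarrow> 0 < sum_sq n x"
  unfolding sum_sq_def by (rule sum_pos2[of _ i]) auto

lemma sum_sq_cong: "(\<And>i. i < n \<Longrightarrow> x i = x' i) \<Longrightarrow> sum_sq n x = sum_sq n x'"
  unfolding sum_sq_def by (intro sum.cong refl) auto

lemma sum_sq_parallelogram:
  "sum_sq n (\<lambda>k. a k + b k) + sum_sq n (\<lambda>k. a k - b k) = 2 * sum_sq n a + 2 * sum_sq n b"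
  unfolding sum_sq_def sum.distrib[symmetric] sum_distrib_left
  by (intro sum.cong refl) (simp add: power2_eq_square algebra_simps)

lemma symmetric_matD:
  "A \<in> carrier_mat n n \<Longrightarrow> A\<^sup>T = A \<Longrightarrow> i < n \<Longrightarrow> j < n \<Longrightarrow> A $$ (j,i) = A $$ (i,j)"
  by (metis carrier_matD index_transpose_mat(1))

lemma scalar_prod_mult_mat_vec_eq_bilinear_form:
  "A \<in> carrier_mat n n \<Longrightarrow> w \<in> carrier_vec n \<Longrightarrow>
    w \<bullet> (A *\<^sub>v w) = bilinear_form A n (\<lambda>i. w $ i) (\<lambda>i. w $ i)"
  unfolding bilinear_form_def by (simp add: scalar_prod_def sum_distrib_left mult.assoc)

lemma bilinear_form_cong:
  "(\<And>i. i < n \<Longrightarrow> x i = x' i) \<Longrightarrow> (\<And>i. i < n \<Longrightarrow> y i = y' i) \<Longrightarrow>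
    bilinear_form A n x y = bilinear_form A n x' y'"
  unfolding bilinear_form_def by (intro sum.cong refl) auto

lemma bilinear_form_eq_sum_row:
  "bilinear_form A n x y = (\<Sum>i\<in>{0..<n}. x i * (\<Sum>j\<in>{0..<n}. A $$ (i,j) * y j))"
  unfolding bilinear_form_def by (simp add: sum_distrib_left mult.assoc)

lemma bilinear_form_smult_right:
  "bilinear_form A n x (\<lambda>i. c * y i) = c * bilinear_form A n x y"
  unfolding bilinear_form_def sum_distrib_left by (intro sum.cong refl) (simp add: ac_simps)

lemma bilinear_form_smult_mat:
  "A \<in> carrier_mat n n \<Longrightarrow> bilinear_form (c \<cdot>\<^sub>m A) n x y = c * bilinear_form A n x y"
  unfolding bilinear_form_def sum_distrib_left by (intro sum.cong refl) (auto simp: ac_simps)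

lemma bilinear_form_mat_diag: "bilinear_form (mat_diag n d) n x y = (\<Sum>i\<in>{0..<n}. x i * d i * y i)"
  unfolding bilinear_form_def
proof (intro sum.cong refl)
  fix i assume i: "i \<in> {0..<n}"
  have "(\<Sum>j\<in>{0..<n}. x i * mat_diag n d $$ (i,j) * y j) =
      (\<Sum>j\<in>{0..<n}. if i = j then x i * d i * y i else 0)"
    using i by (intro sum.cong refl) (auto simp: mat_diag_def)
  then show "(\<Sum>j\<in>{0..<n}. x i * mat_diag n d $$ (i,j) * y j) = x i * d i * y i"
    using i by simp
qed

lemma bilinear_form_unit_vectors:
  assumes "i < n" "j < n"
  shows "bilinear_form A n (\<lambda>k. if k = i then 1 else 0) (\<lambda>k. if k = j then 1 else 0) = A $$ (i,j)"
proof -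
  have [simp]: "(if P then 1 else 0) * c = (if P then c else 0)"
    "c * (if P then 1 else 0) = (if P then c else 0)" for P and c :: real
    by simp_all
  show ?thesis unfolding bilinear_form_def using assms by (simp add: sum.delta)
qed

lemma bilinear_form_diag_conj:
  assumes "H \<in> carrier_mat n n"
  shows "bilinear_form (mat_diag n s * H * mat_diag n s) n x y =
    bilinear_form H n (\<lambda>i. s i * x i) (\<lambda>i. s i * y i)"
  unfolding bilinear_form_def using assms
  by (intro sum.cong refl) (simp add: mat_diag_mult_left[of _ n n] mat_diag_mult_right[of _ n n] ac_simps)

lemma bilinear_form_swap:
  "A \<in> carrier_mat n n \<Longrightarrow> A\<^sup>T = A \<Longrightarrow> bilinear_form A n y x = bilinear_form A n x y"
  unfolding bilinear_form_def
  by (subst sum.swap) (intro sum.cong refl, simp add: symmetric_matD ac_simps)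

lemma abs_bilinear_form_le_entry_bound:
  assumes "\<And>i j. i < n \<Longrightarrow> j < n \<Longrightarrow> \<bar>B $$ (i,j)\<bar> \<le> K"
  shows "\<bar>bilinear_form B n x x\<bar> \<le> K * (\<Sum>i\<in>{0..<n}. \<bar>x i\<bar>)\<^sup>2"
proof -
  have "\<bar>bilinear_form B n x x\<bar> \<le> (\<Sum>i\<in>{0..<n}. \<Sum>j\<in>{0..<n}. \<bar>x i * B $$ (i,j) * x j\<bar>)"
    unfolding bilinear_form_def by (rule order_trans[OF sum_abs sum_mono[OF sum_abs]])
  also have "\<dots> \<le> (\<Sum>i\<in>{0..<n}. \<Sum>j\<in>{0..<n}. \<bar>x i\<bar> * K * \<bar>x j\<bar>)"
    using assms by (intro sum_mono) (simp add: abs_mult mult_left_mono mult_right_mono)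
  also have "\<dots> = K * (\<Sum>i\<in>{0..<n}. \<bar>x i\<bar>)\<^sup>2"
    by (simp add: power2_eq_square sum_distrib_left sum_distrib_right ac_simps)
  finally show ?thesis .
qed

section \<open>Quadratic forms and the spectral radius\<close>

lemma Cauchy_Schwarz_sum:
  fixes x y :: "nat \<Rightarrow> real"
  assumes "finite S"
  shows "(\<Sum>i\<in>S. x i * y i)\<^sup>2 \<le> (\<Sum>i\<in>S. (x i)\<^sup>2) * (\<Sum>i\<in>S. (y i)\<^sup>2)"
proof (cases "(\<Sum>i\<in>S. (x i)\<^sup>2) = 0")
  case True
  then have "\<forall>i\<in>S. x i = 0" using assms by (simp add: sum_nonneg_eq_0_iff)
  then show ?thesis by simp
next
  case False
  define s p t where "s = (\<Sum>i\<in>S. (x i)\<^sup>2)" and "p = (\<Sum>i\<in>S. x i * y i)"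
    and "t = (\<Sum>i\<in>S. (y i)\<^sup>2)"
  have s: "0 < s" using False unfolding s_def by (simp add: sum_nonneg less_le)
  have "0 \<le> (\<Sum>i\<in>S. (y i - (p/s) * x i)\<^sup>2)" by (simp add: sum_nonneg)
  also have "\<dots> = (\<Sum>i\<in>S. (y i)\<^sup>2 - 2 * (p/s) * (x i * y i) + (p/s)\<^sup>2 * (x i)\<^sup>2)"
    by (intro sum.cong) (auto simp: power2_eq_square algebra_simps)
  also have "\<dots> = t - 2 * (p/s) * p + (p/s)\<^sup>2 * s"
    unfolding s_def p_def t_def by (simp add: sum.distrib sum_subtractf sum_distrib_left)
  also have "\<dots> = t - p\<^sup>2 / s" using s by (simp add: power2_eq_square field_simps)
  finally show ?thesis using s unfolding s_def p_def t_def by (simp add: field_simps)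
qed

lemma pow_mat_add:
  fixes A :: "'a :: semiring_1 mat"
  assumes "A \<in> carrier_mat n n"
  shows "A ^\<^sub>m (a + b) = A ^\<^sub>m a * A ^\<^sub>m b"
proof (induction b)
  case (Suc b)
  then show ?case using assms by (simp add: assoc_mult_mat[of _ n n _ n _ n])
qed (use assms in simp)

lemma transpose_pow_mat:
  fixes A :: "'a :: comm_semiring_1 mat"
  assumes "A \<in> carrier_mat n n" "A\<^sup>T = A"
  shows "(A ^\<^sub>m k)\<^sup>T = A ^\<^sub>m k"
proof (induction k)
  case (Suc k)
  have "(A ^\<^sub>m Suc k)\<^sup>T = A * A ^\<^sub>m k"
    using assms Suc transpose_mult[of "A ^\<^sub>m k" n n A n] by simp
  also have "\<dots> = A ^\<^sub>m Suc k" using pow_mat_add[OF assms(1), of 1 k] assms(1) by simp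
  finally show ?case .
qed (use assms in simp)

lemma bilinear_form_pow_sq_le:
  assumes A: "A \<in> carrier_mat n n" "A\<^sup>T = A"
  shows "(bilinear_form (A ^\<^sub>m k) n x x)\<^sup>2 \<le> sum_sq n x * bilinear_form (A ^\<^sub>m (k + k)) n x x"
proof -
  define B where "B = A ^\<^sub>m k"
  have B: "B \<in> carrier_mat n n" "B\<^sup>T = B" unfolding B_def using A by (auto simp: transpose_pow_mat)
  define y where "y i = (\<Sum>j\<in>{0..<n}. B $$ (i,j) * x j)" for i
  have "bilinear_form (A ^\<^sub>m (k + k)) n x x = (\<Sum>l\<in>{0..<n}. \<Sum>i\<in>{0..<n}. \<Sum>j\<in>{0..<n}.
      x i * B $$ (i,l) * B $$ (l,j) * x j)"
    unfolding pow_mat_add[OF A(1)] B_def[symmetric] bilinear_form_def using B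
    by (subst sum.swap, subst (2) sum.swap)
      (simp add: scalar_prod_def sum_distrib_left sum_distrib_right mult.assoc)
  also have "\<dots> = sum_sq n y"
    unfolding sum_sq_def y_def power2_eq_square sum_product using B
    by (intro sum.cong refl) (simp add: symmetric_matD ac_simps)
  finally have "bilinear_form (A ^\<^sub>m (k + k)) n x x = sum_sq n y" .
  moreover have "bilinear_form B n x x = (\<Sum>i\<in>{0..<n}. x i * y i)"
    unfolding bilinear_form_eq_sum_row y_def ..
  ultimately show ?thesis unfolding B_def sum_sq_def by (simp add: Cauchy_Schwarz_sum[OF finite_atLeastLessThan])
qed

lemma bilinear_form_pow_two_pow_le:
  assumes A: "A \<in> carrier_mat n n" "A\<^sup>T = A"
  shows "(bilinear_form A n x x) ^ 2 ^ Suc j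
    \<le> sum_sq n x ^ (2 ^ Suc j - 1) * bilinear_form (A ^\<^sub>m 2 ^ Suc j) n x x"
proof (induction j)
  case 0
  show ?case using bilinear_form_pow_sq_le[OF A, of 1 x] A(1) by (simp add: numeral_2_eq_2)
next
  case (Suc j)
  define m :: nat where "m = 2 ^ Suc j"
  define q S t where "q = bilinear_form A n x x" and "S = sum_sq n x"
    and "t = bilinear_form (A ^\<^sub>m m) n x x"
  have m: "1 \<le> m" "2 ^ Suc (Suc j) = m + m" unfolding m_def by simp_all
  have "q ^ (m + m) = (q ^ m)\<^sup>2" by (simp add: power2_eq_square power_add)
  also have "\<dots> \<le> (S ^ (m - 1) * t)\<^sup>2"
    using Suc by (intro power_mono) (simp_all add: q_def S_def t_def m_def zero_le_even_power)
  also have "\<dots> = S ^ (m - 1) * S ^ (m - 1) * t\<^sup>2" by (simp add: power2_eq_square)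
  also have "\<dots> \<le> S ^ (m - 1) * S ^ (m - 1) * (S * bilinear_form (A ^\<^sub>m (m + m)) n x x)"
    using bilinear_form_pow_sq_le[OF A, of m x] sum_sq_nonneg[of n x]
    by (intro mult_left_mono) (simp_all add: S_def t_def)
  also have "\<dots> = S ^ ((m - 1) + (m - 1) + 1) * bilinear_form (A ^\<^sub>m (m + m)) n x x"
    by (simp only: power_add power_one_right mult.assoc)
  also have "(m - 1) + (m - 1) + 1 = m + m - 1" using m(1) by simp
  finally show ?case unfolding m(2) q_def S_def .
qed

text \<open>Otherwise the previous inequality would make the forms of \<open>A ^ 2\<^sup>j\<close> grow doubly
  exponentially in \<open>j\<close>.\<close>

lemma abs_bilinear_form_le_sum_sq_if_bounded_powers:
  assumes A: "A \<in> carrier_mat n n" "A\<^sup>T = A"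
    and bounded: "\<And>k. bilinear_form (A ^\<^sub>m k) n x x \<le> K"
  shows "\<bar>bilinear_form A n x x\<bar> \<le> sum_sq n x"
proof (rule ccontr)
  define q S where "q = bilinear_form A n x x" and "S = sum_sq n x"
  assume "\<not> ?thesis"
  then have qS: "S < \<bar>q\<bar>" by (simp add: q_def S_def)
  have S: "0 < S"
  proof (rule ccontr)
    assume "\<not> 0 < S"
    then have "S = 0" using sum_sq_nonneg[of n x] by (simp add: S_def)
    moreover have "q\<^sup>2 \<le> S * bilinear_form (A ^\<^sub>m 2) n x x"
      using bilinear_form_pow_two_pow_le[OF A, of x 0] by (simp add: q_def S_def)
    ultimately show False using qS by simp
  qed
  define z where "z = (q / S)\<^sup>2"
  have "1 < \<bar>q / S\<bar>" using qS S by simp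
  then have "1 < \<bar>q / S\<bar>\<^sup>2" by (rule one_less_power) simp
  then have z: "1 < z" by (simp only: z_def power2_abs)
  have "z ^ 2 ^ j * S \<le> K" for j
  proof -
    define m :: nat where "m = 2 ^ Suc j"
    have "z ^ 2 ^ j = (q / S) ^ m" by (simp add: z_def m_def power_mult)
    moreover have "S ^ m = S * S ^ (m - 1)" by (simp add: m_def flip: power_Suc)
    ultimately have "(z ^ 2 ^ j * S) * S ^ (m - 1) = q ^ m"
      using S by (simp add: power_divide mult.assoc)
    also have "\<dots> \<le> S ^ (m - 1) * bilinear_form (A ^\<^sub>m m) n x x"
      using bilinear_form_pow_two_pow_le[OF A] by (simp add: q_def S_def m_def)
    also have "\<dots> \<le> S ^ (m - 1) * K"
      using bounded S by (intro mult_left_mono) simp_all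
    finally show ?thesis using S by (simp add: mult.commute[of _ K])
  qed
  then have bound: "z ^ 2 ^ j \<le> K / S" for j using S by (simp add: pos_le_divide_eq)
  obtain j where "K / S < z ^ j" using real_arch_pow[OF z] by blast
  moreover have "z ^ j \<le> z ^ 2 ^ j" using z by (intro power_increasing) (simp_all add: less_imp_le)
  ultimately show False using bound[of j] by simp
qed

lemma smult_mat_mult_mat_vec:
  "A \<in> carrier_mat nr nc \<Longrightarrow> v \<in> carrier_vec nc \<Longrightarrow> (c \<cdot>\<^sub>m A) *\<^sub>v v = c \<cdot>\<^sub>v (A *\<^sub>v v)"
  by (intro eq_vecI) (auto simp: scalar_prod_def sum_distrib_left mult.assoc)

lemma map_mat_of_real_smult:
  "map_mat complex_of_real (r \<cdot>\<^sub>m M) = complex_of_real r \<cdot>\<^sub>m map_mat complex_of_real M"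
  by (intro eq_matI) auto

lemma spectral_radius_nonneg:
  assumes "A \<in> carrier_mat n n" "0 < n"
  shows "0 \<le> spectral_radius A"
  using spectral_radius_mem_max(1)[OF assms] by auto

lemma spectral_radius_smult_le:
  assumes A: "A \<in> carrier_mat n n" and n: "0 < n" and c: "c \<noteq> 0"
  shows "spectral_radius (c \<cdot>\<^sub>m A) \<le> norm c * spectral_radius A"
proof -
  have cA: "c \<cdot>\<^sub>m A \<in> carrier_mat n n" using A by simp
  obtain \<mu> where \<mu>: "\<mu> \<in> spectrum (c \<cdot>\<^sub>m A)" "spectral_radius (c \<cdot>\<^sub>m A) = norm \<mu>"
    using spectral_radius_mem_max(1)[OF cA n] by auto
  then obtain v where "eigenvector (c \<cdot>\<^sub>m A) v \<mu>" unfolding spectrum_def eigenvalue_def by auto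
  then have v: "v \<in> carrier_vec n" "v \<noteq> 0\<^sub>v n" and "c \<cdot>\<^sub>v (A *\<^sub>v v) = \<mu> \<cdot>\<^sub>v v"
    unfolding eigenvector_def using A by (auto simp: smult_mat_mult_mat_vec)
  then have "(1 / c) \<cdot>\<^sub>v (c \<cdot>\<^sub>v (A *\<^sub>v v)) = (\<mu> / c) \<cdot>\<^sub>v v" by (simp add: smult_smult_assoc)
  then have "A *\<^sub>v v = (\<mu> / c) \<cdot>\<^sub>v v" using c by (simp add: smult_smult_assoc)
  then have "\<mu> / c \<in> spectrum A"
    using v A unfolding spectrum_def eigenvalue_def eigenvector_def by auto
  then have "norm (\<mu> / c) \<le> spectral_radius A" using spectral_radius_mem_max(2)[OF A n] by blast
  then show ?thesis using \<mu>(2) c by (simp add: norm_divide pos_divide_le_eq mult.commute)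
qed

lemma spectral_radius_smult:
  assumes A: "A \<in> carrier_mat n n" and n: "0 < n" and c: "c \<noteq> 0"
  shows "spectral_radius (c \<cdot>\<^sub>m A) = norm c * spectral_radius A"
proof (rule antisym)
  have "spectral_radius ((1 / c) \<cdot>\<^sub>m (c \<cdot>\<^sub>m A)) \<le> norm (1 / c) * spectral_radius (c \<cdot>\<^sub>m A)"
    using A n c by (intro spectral_radius_smult_le[of _ n]) auto
  moreover have "(1 / c) \<cdot>\<^sub>m (c \<cdot>\<^sub>m A) = A" using c by (intro eq_matI) auto
  ultimately show "norm c * spectral_radius A \<le> spectral_radius (c \<cdot>\<^sub>m A)"
    using c by (simp add: norm_divide pos_le_divide_eq mult.commute)
qed (rule spectral_radius_smult_le[OF A n c])

lemma pow_entries_bounded_if_spectral_radius_less_1: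
  fixes A :: "real mat"
  assumes A: "A \<in> carrier_mat n n" and "spectral_radius (map_mat complex_of_real A) < 1"
  obtains K where "\<And>k i j. i < n \<Longrightarrow> j < n \<Longrightarrow> \<bar>(A ^\<^sub>m k) $$ (i,j)\<bar> \<le> K"
proof -
  have "map_mat complex_of_real A \<in> carrier_mat n n" using A by simp
  then obtain K where K: "\<And>k. norm_bound (map_mat complex_of_real A ^\<^sub>m k) K"
    using spectral_radius_jnf_norm_bound_less_1_upper_triangular assms(2) by blast
  have "\<bar>(A ^\<^sub>m k) $$ (i,j)\<bar> \<le> K" if "i < n" "j < n" for k i j
  proof -
    have "norm ((map_mat complex_of_real A ^\<^sub>m k) $$ (i,j)) \<le> K"
      using K[of k] that A unfolding norm_bound_def by simp
    also have "map_mat complex_of_real A ^\<^sub>m k = map_mat complex_of_real (A ^\<^sub>m k)"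
      by (rule of_real_hom.mat_hom_pow[OF A, symmetric])
    finally show ?thesis using that A by simp
  qed
  then show thesis by (rule that)
qed

lemma abs_bilinear_form_le_if_spectral_radius_less:
  fixes M :: "real mat"
  assumes M: "M \<in> carrier_mat n n" "M\<^sup>T = M" and n: "0 < n"
    and r: "spectral_radius (map_mat complex_of_real M) < r"
  shows "\<bar>bilinear_form M n x x\<bar> \<le> r * sum_sq n x"
proof -
  have "0 \<le> spectral_radius (map_mat complex_of_real M)"
    using M n by (intro spectral_radius_nonneg[of _ n]) simp_all
  then have r0: "0 < r" using r by simp
  define A where "A = (1 / r) \<cdot>\<^sub>m M"
  have A: "A \<in> carrier_mat n n" "A\<^sup>T = A"
    unfolding A_def using M by (auto intro!: eq_matI simp: symmetric_matD)
  have "spectral_radius (map_mat complex_of_real A) = spectral_radius (map_mat complex_of_real M) / r"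
    unfolding A_def map_mat_of_real_smult using M n r0
    by (subst spectral_radius_smult[of _ n]) (auto simp: norm_divide)
  then obtain K where "\<And>k i j. i < n \<Longrightarrow> j < n \<Longrightarrow> \<bar>(A ^\<^sub>m k) $$ (i,j)\<bar> \<le> K"
    using pow_entries_bounded_if_spectral_radius_less_1[OF A(1)] r r0 by auto
  then have "bilinear_form (A ^\<^sub>m k) n x x \<le> K * (\<Sum>i\<in>{0..<n}. \<bar>x i\<bar>)\<^sup>2" for k
    by (rule abs_le_D1[OF abs_bilinear_form_le_entry_bound])
  then have "\<bar>bilinear_form A n x x\<bar> \<le> sum_sq n x"
    by (rule abs_bilinear_form_le_sum_sq_if_bounded_powers[OF A])
  moreover have "bilinear_form A n x x = bilinear_form M n x x / r"
    by (simp add: A_def bilinear_form_smult_mat[OF M(1)])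
  ultimately have "\<bar>bilinear_form M n x x\<bar> \<le> sum_sq n x * r"
    using r0 by (simp add: abs_divide pos_divide_le_eq)
  then show ?thesis by (simp add: mult.commute[of r])
qed

lemma abs_bilinear_form_le_spectral_radius:
  fixes M :: "real mat"
  assumes M: "M \<in> carrier_mat n n" "M\<^sup>T = M" and n: "0 < n"
  shows "\<bar>bilinear_form M n x x\<bar> \<le> spectral_radius (map_mat complex_of_real M) * sum_sq n x"
proof (cases "sum_sq n x = 0")
  case True
  then show ?thesis
    using abs_bilinear_form_le_if_spectral_radius_less[OF M n, of "spectral_radius (map_mat complex_of_real M) + 1" x]
    by simp
next
  case False
  then have S: "0 < sum_sq n x" using sum_sq_nonneg[of n x] by simp
  have "\<bar>bilinear_form M n x x\<bar> / sum_sq n x \<le> spectral_radius (map_mat complex_of_real M)"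
  proof (rule dense_ge)
    fix r assume "spectral_radius (map_mat complex_of_real M) < r"
    then have "\<bar>bilinear_form M n x x\<bar> \<le> r * sum_sq n x"
      by (rule abs_bilinear_form_le_if_spectral_radius_less[OF M n])
    then show "\<bar>bilinear_form M n x x\<bar> / sum_sq n x \<le> r" using S by (simp add: pos_divide_le_eq)
  qed
  then show ?thesis using S by (simp add: pos_divide_le_eq)
qed

lemma bilinear_form_polarization:
  assumes "A \<in> carrier_mat n n" "A\<^sup>T = A"
  shows "bilinear_form A n (\<lambda>k. a k + b k) (\<lambda>k. a k + b k) - bilinear_form A n (\<lambda>k. a k - b k) (\<lambda>k. a k - b k)
    = 4 * bilinear_form A n a b"
proof -
  have "bilinear_form A n (\<lambda>k. a k + b k) (\<lambda>k. a k + b k) - bilinear_form A n (\<lambda>k. a k - b k) (\<lambda>k. a k - b k)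
    = 2 * bilinear_form A n a b + 2 * bilinear_form A n b a"
    unfolding bilinear_form_def sum_subtractf[symmetric] sum_distrib_left sum.distrib[symmetric]
    by (intro sum.cong refl) (simp add: algebra_simps)
  then show ?thesis using bilinear_form_swap[OF assms, of b a] by simp
qed

lemma abs_bilinear_form_le_spectral_radius_sum_sq:
  fixes M :: "real mat"
  assumes M: "M \<in> carrier_mat n n" "M\<^sup>T = M" and n: "0 < n"
  shows "\<bar>bilinear_form M n a b\<bar> \<le> spectral_radius (map_mat complex_of_real M) / 2 * (sum_sq n a + sum_sq n b)"
proof -
  define \<rho> where "\<rho> = spectral_radius (map_mat complex_of_real M)"
  have "4 * \<bar>bilinear_form M n a b\<bar> = \<bar>bilinear_form M n (\<lambda>k. a k + b k) (\<lambda>k. a k + b k)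
      - bilinear_form M n (\<lambda>k. a k - b k) (\<lambda>k. a k - b k)\<bar>"
    by (simp add: bilinear_form_polarization[OF M] abs_mult)
  also have "\<dots> \<le> \<rho> * sum_sq n (\<lambda>k. a k + b k) + \<rho> * sum_sq n (\<lambda>k. a k - b k)"
    unfolding \<rho>_def
    by (intro order_trans[OF abs_triangle_ineq4 add_mono] abs_bilinear_form_le_spectral_radius[OF M n])
  also have "\<dots> = 2 * \<rho> * (sum_sq n a + sum_sq n b)"
    unfolding distrib_left[symmetric] sum_sq_parallelogram by (simp add: algebra_simps)
  finally show ?thesis by (simp add: \<rho>_def)
qed

lemma abs_entry_le_spectral_radius:
  fixes M :: "real mat"
  assumes M: "M \<in> carrier_mat n n" "M\<^sup>T = M" and ij: "i < n" "j < n"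
  shows "\<bar>M $$ (i,j)\<bar> \<le> spectral_radius (map_mat complex_of_real M)"
proof -
  have unit: "sum_sq n (\<lambda>k. if k = l then 1 else 0) = 1" if "l < n" for l
    unfolding sum_sq_def using that by (simp add: if_distrib[of "\<lambda>z. z\<^sup>2"] sum.delta cong: if_cong)
  show ?thesis
    using abs_bilinear_form_le_spectral_radius_sum_sq[OF M, of "\<lambda>k. if k = i then 1 else 0"
        "\<lambda>k. if k = j then 1 else 0"] ij
    by (simp add: bilinear_form_unit_vectors unit)
qed

lemma spectral_radius_pos_if_entry_nonzero:
  fixes M :: "real mat"
  assumes "M \<in> carrier_mat n n" "M\<^sup>T = M" "i < n" "j < n" "M $$ (i,j) \<noteq> 0"
  shows "0 < spectral_radius (map_mat complex_of_real M)"
  using abs_entry_le_spectral_radius[OF assms(1-4)] assms(5) by simp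

lemma eigenvector_row_sum:
  assumes "A \<in> carrier_mat n n" "eigenvector A v c" "i < n"
  shows "(\<Sum>j\<in>{0..<n}. A $$ (i,j) * v $ j) = c * v $ i"
proof -
  have "v \<in> carrier_vec n" "A *\<^sub>v v = c \<cdot>\<^sub>v v" using assms(1,2) unfolding eigenvector_def by auto
  then have "(A *\<^sub>v v) $ i = c * v $ i" using assms(3) by simp
  then show ?thesis using assms(1,3) \<open>v \<in> carrier_vec n\<close> by (simp add: scalar_prod_def)
qed

lemma eigenvector_nonzero_entry:
  assumes "A \<in> carrier_mat n n" "eigenvector A v c"
  obtains i where "i < n" "v $ i \<noteq> 0"
  using assms unfolding eigenvector_def by (metis carrier_matD(1) carrier_vecD eq_vecI index_zero_vec)

text \<open>The Hermitian form \<open>v\<^sup>* M v\<close> equals \<open>c |v|\<^sup>2\<close> and is invariant under conjugation.\<close>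

lemma eigenvalue_of_real_symmetric_is_real:
  fixes M :: "real mat"
  assumes M: "M \<in> carrier_mat n n" "M\<^sup>T = M"
    and ev: "eigenvector (map_mat complex_of_real M) v c"
  shows "Im c = 0"
proof -
  have C: "map_mat complex_of_real M \<in> carrier_mat n n" using M by simp
  obtain i0 where i0: "i0 < n" "v $ i0 \<noteq> 0" using eigenvector_nonzero_entry[OF C ev] .
  define N where "N = (\<Sum>i\<in>{0..<n}. (cmod (v $ i))\<^sup>2)"
  have N: "0 < N" unfolding N_def by (rule sum_pos2[of _ i0]) (use i0 in auto)
  define s where "s = (\<Sum>i\<in>{0..<n}. \<Sum>j\<in>{0..<n}. cnj (v $ i) * complex_of_real (M $$ (i,j)) * v $ j)"
  have "s = (\<Sum>i\<in>{0..<n}. cnj (v $ i) * (c * v $ i))"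
    unfolding s_def using eigenvector_row_sum[OF C ev] M(1)
    by (intro sum.cong refl) (simp add: mult.assoc flip: sum_distrib_left)
  also have "\<dots> = c * complex_of_real N"
    unfolding N_def of_real_sum sum_distrib_left complex_norm_square
    by (intro sum.cong refl) (simp add: algebra_simps)
  finally have s: "s = c * complex_of_real N" .
  have "cnj s = (\<Sum>i\<in>{0..<n}. \<Sum>j\<in>{0..<n}. v $ i * complex_of_real (M $$ (i,j)) * cnj (v $ j))"
    unfolding s_def by simp
  also have "\<dots> = (\<Sum>j\<in>{0..<n}. \<Sum>i\<in>{0..<n}. v $ i * complex_of_real (M $$ (i,j)) * cnj (v $ j))"
    by (rule sum.swap)
  also have "\<dots> = s"
    unfolding s_def using M by (intro sum.cong refl) (simp add: symmetric_matD ac_simps)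
  finally have "Im s = 0" by (metis cnj.simps(2) neg_equal_zero)
  then show ?thesis using N by (simp add: s)
qed

lemma symmetric_mat_eigenvector_spectral_radius:
  fixes M :: "real mat"
  assumes M: "M \<in> carrier_mat n n" "M\<^sup>T = M" and n: "0 < n"
  obtains u l where "eigenvector M u l" "\<bar>l\<bar> = spectral_radius (map_mat complex_of_real M)"
proof -
  let ?C = "map_mat complex_of_real M"
  have C: "?C \<in> carrier_mat n n" using M by simp
  obtain c where c: "c \<in> spectrum ?C" "spectral_radius ?C = cmod c"
    using spectral_radius_mem_max(1)[OF C n] by auto
  then obtain v where "eigenvector ?C v c" unfolding spectrum_def eigenvalue_def by auto
  then have c_real: "c = complex_of_real (Re c)"
    using eigenvalue_of_real_symmetric_is_real[OF M] by (simp add: complex_eq_iff)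
  then have "poly (char_poly ?C) (complex_of_real (Re c)) = 0"
    using c(1) eigenvalue_root_char_poly[OF C] unfolding spectrum_def by (metis mem_Collect_eq)
  then have "poly (char_poly M) (Re c) = 0"
    unfolding of_real_hom.char_poly_hom[OF M(1)] of_real_hom.poly_map_poly by simp
  then obtain u where "eigenvector M u (Re c)"
    using eigenvalue_root_char_poly[OF M(1)] unfolding eigenvalue_def by blast
  moreover have "\<bar>Re c\<bar> = spectral_radius ?C" using c(2) c_real by (metis norm_of_real)
  ultimately show thesis by (rule that)
qed

section \<open>Positive definiteness of the block matrix\<close>

lemma sum_atLeast0_lessThan_add:
  fixes m n :: nat
  shows "(\<Sum>i\<in>{0..<m + n}. f i) = (\<Sum>i\<in>{0..<m}. f i) + (\<Sum>i\<in>{0..<n}. f (m + i))"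
proof -
  have "(\<Sum>i\<in>{0..<m + n}. f i) = (\<Sum>i\<in>{0..<m}. f i) + (\<Sum>i\<in>{m..<m + n}. f i)"
    by (simp add: sum.atLeastLessThan_concat)
  also have "(\<Sum>i\<in>{m..<m + n}. f i) = (\<Sum>i\<in>{0..<n}. f (m + i))"
    using sum.shift_bounds_nat_ivl[where g = f and m = 0 and k = m and n = n] by (simp add: add.commute)
  finally show ?thesis .
qed

lemma bilinear_form_four_block:
  assumes A: "A \<in> carrier_mat N N" and D: "D \<in> carrier_mat N N"
  shows "bilinear_form (four_block_mat A B C D) (N + N) w w =
    bilinear_form A N w w + bilinear_form B N w (\<lambda>i. w (N + i))
    + bilinear_form C N (\<lambda>i. w (N + i)) w + bilinear_form D N (\<lambda>i. w (N + i)) (\<lambda>i. w (N + i))"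
  unfolding bilinear_form_def sum_atLeast0_lessThan_add sum.distrib using A D
  by (simp add: add_ac)

lemma sum_sq_smult: "sum_sq n (\<lambda>i. c * x i) = c\<^sup>2 * sum_sq n x"
  unfolding sum_sq_def sum_distrib_left by (simp add: power_mult_distrib)

lemma bilinear_form_eigenvector:
  assumes "M \<in> carrier_mat n n" "eigenvector M u l"
  shows "bilinear_form M n (\<lambda>i. u $ i) (\<lambda>i. u $ i) = l * sum_sq n (\<lambda>i. u $ i)"
proof -
  have "bilinear_form M n (\<lambda>i. u $ i) (\<lambda>i. u $ i) = (\<Sum>i\<in>{0..<n}. u $ i * (l * u $ i))"
    unfolding bilinear_form_eq_sum_row using eigenvector_row_sum[OF assms] by (intro sum.cong refl) simp
  then show ?thesis by (simp add: sum_sq_def sum_distrib_left power2_eq_square ac_simps)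
qed

context
  fixes N :: nat and s :: "nat \<Rightarrow> real" and H :: "real mat"
  assumes s: "\<And>i. i < N \<Longrightarrow> 0 < s i"
    and H: "H \<in> carrier_mat N N" "H\<^sup>T = H"
begin

text \<open>\<open>s\<close> is the diagonal of \<open>D\<^sub>V\<^sup>-\<^sup>1\<^sup>/\<^sup>2\<close>; the substitution \<open>a = D\<^sub>V\<^sup>1\<^sup>/\<^sup>2 x\<close>, \<open>b = D\<^sub>V\<^sup>1\<^sup>/\<^sup>2 y\<close>
  turns the diagonal blocks into identities.\<close>

lemma quadratic_form_four_block_diag:
  assumes w: "w \<in> carrier_vec (N + N)"
  shows "w \<bullet> (four_block_mat (mat_diag N (\<lambda>i. 1 / (s i)\<^sup>2)) (k \<cdot>\<^sub>m H) (k \<cdot>\<^sub>m H)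
      (mat_diag N (\<lambda>i. 1 / (s i)\<^sup>2)) *\<^sub>v w)
    = sum_sq N (\<lambda>i. w $ i / s i) + sum_sq N (\<lambda>i. w $ (N + i) / s i)
      + 2 * k * bilinear_form (mat_diag N s * H * mat_diag N s) N
          (\<lambda>i. w $ i / s i) (\<lambda>i. w $ (N + i) / s i)"
proof -
  let ?V = "mat_diag N (\<lambda>i. 1 / (s i)\<^sup>2)" and ?x = "\<lambda>i. w $ i" and ?y = "\<lambda>i. w $ (N + i)"
  have V: "bilinear_form ?V N z z = sum_sq N (\<lambda>i. z i / s i)" for z
    unfolding bilinear_form_mat_diag sum_sq_def by (simp add: power2_eq_square)
  have "bilinear_form (mat_diag N s * H * mat_diag N s) N (\<lambda>i. ?x i / s i) (\<lambda>i. ?y i / s i)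
      = bilinear_form H N ?x ?y"
    unfolding bilinear_form_diag_conj[OF H(1)] using s
    by (intro bilinear_form_cong) (auto dest: s[THEN less_imp_neq])
  moreover have "bilinear_form H N ?y ?x = bilinear_form H N ?x ?y" by (rule bilinear_form_swap[OF H])
  moreover have "w \<bullet> (four_block_mat ?V (k \<cdot>\<^sub>m H) (k \<cdot>\<^sub>m H) ?V *\<^sub>v w)
      = bilinear_form ?V N ?x ?x + bilinear_form (k \<cdot>\<^sub>m H) N ?x ?y
        + bilinear_form (k \<cdot>\<^sub>m H) N ?y ?x + bilinear_form ?V N ?y ?y"
    using w by (simp add: scalar_prod_mult_mat_vec_eq_bilinear_form[of _ "N + N"]
        bilinear_form_four_block)
  ultimately show ?thesis by (simp add: bilinear_form_smult_mat[OF H(1)] V)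
qed

lemma symmetric_mat_diag_conj:
  "mat_diag N s * H * mat_diag N s \<in> carrier_mat N N"
  "(mat_diag N s * H * mat_diag N s)\<^sup>T = mat_diag N s * H * mat_diag N s"
  using H by (auto intro!: eq_matI simp: mat_diag_mult_left[of _ N N] mat_diag_mult_right[of _ N N]
      symmetric_matD)

lemma spectral_radius_diag_conj_pos:
  assumes "i < N" "j < N" "H $$ (i,j) \<noteq> 0"
  shows "0 < spectral_radius (map_mat complex_of_real (mat_diag N s * H * mat_diag N s))"
proof (rule spectral_radius_pos_if_entry_nonzero[OF symmetric_mat_diag_conj assms(1,2)])
  show "(mat_diag N s * H * mat_diag N s) $$ (i,j) \<noteq> 0"
    using assms H(1) s[OF assms(1)] s[OF assms(2)]
    by (simp add: mat_diag_mult_left[of _ N N] mat_diag_mult_right[of _ N N])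
qed

lemma spectral_bound_if_pos_def_four_block_diag:
  assumes N: "0 < N" and pd: "pos_def (four_block_mat (mat_diag N (\<lambda>i. 1 / (s i)\<^sup>2)) (k \<cdot>\<^sub>m H) (k \<cdot>\<^sub>m H)
      (mat_diag N (\<lambda>i. 1 / (s i)\<^sup>2)))"
  shows "\<bar>k\<bar> * spectral_radius (map_mat complex_of_real (mat_diag N s * H * mat_diag N s)) < 1"
proof -
  let ?P = "four_block_mat (mat_diag N (\<lambda>i. 1 / (s i)\<^sup>2)) (k \<cdot>\<^sub>m H) (k \<cdot>\<^sub>m H)
      (mat_diag N (\<lambda>i. 1 / (s i)\<^sup>2))"
  define M where "M = mat_diag N s * H * mat_diag N s"
  note M = symmetric_mat_diag_conj[folded M_def]
  obtain u l where u: "eigenvector M u l"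
    and l: "\<bar>l\<bar> = spectral_radius (map_mat complex_of_real M)"
    using symmetric_mat_eigenvector_spectral_radius[OF M N] by blast
  show ?thesis unfolding M_def[symmetric] l[symmetric]
  proof (cases "k * l = 0")
    case True
    then show "\<bar>k\<bar> * \<bar>l\<bar> < 1" by (auto simp: abs_mult)
  next
    case False
    define \<sigma> where "\<sigma> = - sgn (k * l)"
    define w where "w = vec (N + N) (\<lambda>i. if i < N then s i * u $ i else \<sigma> * s (i - N) * u $ (i - N))"
    obtain i0 where i0: "i0 < N" "u $ i0 \<noteq> 0" using eigenvector_nonzero_entry[OF M(1) u] .
    have w: "w \<in> carrier_vec (N + N)" unfolding w_def by simp
    have "w $ i0 \<noteq> 0" using i0 s[OF i0(1)] by (simp add: w_def)
    then have "w \<noteq> 0\<^sub>v (N + N)" using i0(1) by auto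
    then have "0 < w \<bullet> (?P *\<^sub>v w)" using pd w unfolding pos_def_def by simp
    also have "w \<bullet> (?P *\<^sub>v w) = sum_sq N (\<lambda>i. u $ i) + sum_sq N (\<lambda>i. \<sigma> * u $ i)
        + 2 * k * bilinear_form M N (\<lambda>i. u $ i) (\<lambda>i. \<sigma> * u $ i)"
      unfolding quadratic_form_four_block_diag[OF w, folded M_def] using s
      by (intro arg_cong2[where f = "(+)"] arg_cong[where f = "(*) (2 * k)"] bilinear_form_cong
          sum_sq_cong) (auto simp: w_def less_imp_neq[symmetric])
    also have "\<dots> = 2 * (1 - \<bar>k * l\<bar>) * sum_sq N (\<lambda>i. u $ i)"
      using False unfolding sum_sq_smult bilinear_form_smult_right bilinear_form_eigenvector[OF M(1) u]
      by (simp add: \<sigma>_def abs_sgn algebra_simps sgn_mult sgn_if)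
    finally have "\<bar>k * l\<bar> < 1" using sum_sq_nonneg[of N "\<lambda>i. u $ i"]
      by (simp add: zero_less_mult_iff)
    then show "\<bar>k\<bar> * \<bar>l\<bar> < 1" by (simp add: abs_mult)
  qed
qed

lemma pos_def_four_block_diag_if_spectral_bound:
  assumes N: "0 < N"
    and lt: "\<bar>k\<bar> * spectral_radius (map_mat complex_of_real (mat_diag N s * H * mat_diag N s)) < 1"
  shows "pos_def (four_block_mat (mat_diag N (\<lambda>i. 1 / (s i)\<^sup>2)) (k \<cdot>\<^sub>m H) (k \<cdot>\<^sub>m H)
      (mat_diag N (\<lambda>i. 1 / (s i)\<^sup>2)))"
proof -
  let ?P = "four_block_mat (mat_diag N (\<lambda>i. 1 / (s i)\<^sup>2)) (k \<cdot>\<^sub>m H) (k \<cdot>\<^sub>m H)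
      (mat_diag N (\<lambda>i. 1 / (s i)\<^sup>2))"
  define M where "M = mat_diag N s * H * mat_diag N s"
  define \<rho> where "\<rho> = spectral_radius (map_mat complex_of_real M)"
  note M = symmetric_mat_diag_conj[folded M_def]
  have "?P\<^sup>T = ?P"
    using H by (subst transpose_four_block_mat[of _ N N _ N _ N]) (auto intro!: eq_matI simp: symmetric_matD)
  moreover have "0 < w \<bullet> (?P *\<^sub>v w)" if w: "w \<in> carrier_vec (N + N)" "w \<noteq> 0\<^sub>v (N + N)" for w
  proof -
    define a b where "a i = w $ i / s i" and "b i = w $ (N + i) / s i" for i
    obtain i where i: "i < N + N" "w $ i \<noteq> 0" using w by (metis carrier_vecD eq_vecI index_zero_vec)
    have S: "0 < sum_sq N a + sum_sq N b"
    proof (cases "i < N")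
      case True
      then have "0 < sum_sq N a" using i s[of i] by (intro sum_sq_pos) (auto simp: a_def)
      then show ?thesis using sum_sq_nonneg[of N b] by simp
    next
      case False
      then have "i - N < N" using i(1) by simp
      then have "0 < sum_sq N b" using i False s[of "i - N"] by (intro sum_sq_pos) (auto simp: b_def)
      then show ?thesis using sum_sq_nonneg[of N a] by simp
    qed
    have "2 * \<bar>bilinear_form M N a b\<bar> \<le> \<rho> * (sum_sq N a + sum_sq N b)"
      using abs_bilinear_form_le_spectral_radius_sum_sq[OF M N, of a b] by (simp add: \<rho>_def)
    then have "\<bar>k\<bar> * (2 * \<bar>bilinear_form M N a b\<bar>) \<le> \<bar>k\<bar> * (\<rho> * (sum_sq N a + sum_sq N b))"
      by (rule mult_left_mono) simp
    then have "- (2 * k * bilinear_form M N a b) \<le> \<bar>k\<bar> * \<rho> * (sum_sq N a + sum_sq N b)"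
      by (intro abs_le_D2) (simp add: abs_mult ac_simps)
    moreover have "\<bar>k\<bar> * \<rho> * (sum_sq N a + sum_sq N b) < sum_sq N a + sum_sq N b"
      using mult_strict_right_mono[OF lt S] unfolding \<rho>_def M_def by simp
    ultimately show ?thesis
      unfolding quadratic_form_four_block_diag[OF w(1), folded M_def] a_def[symmetric] b_def[symmetric]
      by linarith
  qed
  ultimately show ?thesis unfolding pos_def_def by simp
qed

lemma pos_def_four_block_diag_iff:
  "0 < N \<Longrightarrow> pos_def (four_block_mat (mat_diag N (\<lambda>i. 1 / (s i)\<^sup>2)) (k \<cdot>\<^sub>m H) (k \<cdot>\<^sub>m H)
      (mat_diag N (\<lambda>i. 1 / (s i)\<^sup>2)))
    \<longleftrightarrow> \<bar>k\<bar> * spectral_radius (map_mat complex_of_real (mat_diag N s * H * mat_diag N s)) < 1"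
  using spectral_bound_if_pos_def_four_block_diag pos_def_four_block_diag_if_spectral_bound by blast

end

section \<open>Positive diagonal matrices and Kronecker products\<close>

definition pos_diag :: "nat \<Rightarrow> real mat \<Rightarrow> bool" where
  "pos_diag n A \<longleftrightarrow> (\<exists>d. A = mat_diag n d \<and> (\<forall>i<n. 0 < d i))"

lemma pos_diag_one: "pos_diag n (1\<^sub>m n)"
  unfolding pos_diag_def by (rule exI[of _ "\<lambda>_. 1"]) simp

lemma pos_diag_Itilde: "pos_diag p (Itilde p)"
  unfolding pos_diag_def Itilde_def mat_diag_def
  by (rule exI[of _ "\<lambda>i. if i = 0 \<or> i = p - 1 then 1 / 2 else 1"]) (auto intro!: cong_mat)

lemma smult_mat_diag: "(c :: real) \<cdot>\<^sub>m mat_diag n d = mat_diag n (\<lambda>i. c * d i)"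
  by (rule eq_matI) (auto simp: mat_diag_def)

lemma pos_diag_smult: "pos_diag n A \<Longrightarrow> 0 < c \<Longrightarrow> pos_diag n (c \<cdot>\<^sub>m A)"
  unfolding pos_diag_def by (auto simp: smult_mat_diag)

lemma kron_mat_diag:
  "kron (mat_diag a f) (mat_diag b g) = mat_diag (a * b) (\<lambda>i. f (i div b) * g (i mod b))"
proof (rule eq_matI)
  fix i j assume "i < dim_row (mat_diag (a * b) (\<lambda>i. f (i div b) * g (i mod b)))"
    "j < dim_col (mat_diag (a * b) (\<lambda>i. f (i div b) * g (i mod b)))"
  then have ij: "i < a * b" "j < a * b" by simp_all
  then have "0 < b" by (cases b) auto
  with ij have "i div b < a" "j div b < a" "i mod b < b" "j mod b < b"
    by (auto simp: less_mult_imp_div_less mult.commute intro: mod_less_divisor)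
  moreover have "i = j \<longleftrightarrow> i div b = j div b \<and> i mod b = j mod b" by (metis div_mult_mod_eq)
  ultimately show "kron (mat_diag a f) (mat_diag b g) $$ (i,j)
      = mat_diag (a * b) (\<lambda>i. f (i div b) * g (i mod b)) $$ (i,j)"
    using ij by (auto simp: kron_def mat_diag_def)
qed (simp_all add: kron_def)

lemma pos_diag_kron:
  assumes "pos_diag a A" "pos_diag b B"
  shows "pos_diag (a * b) (kron A B)"
proof -
  obtain f g where A: "A = mat_diag a f" "\<forall>i<a. 0 < f i" and B: "B = mat_diag b g" "\<forall>i<b. 0 < g i"
    using assms unfolding pos_diag_def by blast
  have "0 < f (i div b) * g (i mod b)" if "i < a * b" for i
  proof -
    from that have "0 < b" by (cases b) auto
    with that show ?thesis using A(2) B(2) by (simp add: less_mult_imp_div_less mult.commute)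
  qed
  then show ?thesis unfolding pos_diag_def A B kron_mat_diag by blast
qed

lemma four_block_mat_diag:
  "four_block_mat (mat_diag a f) (0\<^sub>m a b) (0\<^sub>m b a) (mat_diag b g)
    = mat_diag (a + b) (\<lambda>i. if i < a then f i else g (i - a))"
  by (rule eq_matI) (auto simp: mat_diag_def)

lemma pos_diag_diag_block_mat: "list_all2 pos_diag ns As \<Longrightarrow> pos_diag (sum_list ns) (diag_block_mat As)"
proof (induction As arbitrary: ns)
  case Nil
  then show ?case unfolding pos_diag_def by (auto intro!: exI[of _ "\<lambda>_. 1"] eq_matI)
next
  case (Cons A As)
  then obtain n ns' where ns: "ns = n # ns'" "pos_diag n A" "list_all2 pos_diag ns' As"
    by (cases ns) auto
  then obtain f g where A: "A = mat_diag n f" "\<forall>i<n. 0 < f i"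
    and B: "diag_block_mat As = mat_diag (sum_list ns') g" "\<forall>i<sum_list ns'. 0 < g i"
    using Cons.IH unfolding pos_diag_def by blast
  then show ?case
    unfolding pos_diag_def ns(1) by (auto simp: Let_def four_block_mat_diag intro!: exI)
qed

lemma mat_inv_mat_diag:
  assumes "\<And>i. i < n \<Longrightarrow> d i \<noteq> 0"
  shows "mat_inv (mat_diag n d) = mat_diag n (\<lambda>i. 1 / d i)"
  unfolding mat_inv_def
proof (rule the_equality)
  have "mat_diag n d * mat_diag n (\<lambda>i. 1 / d i) = 1\<^sub>m n" "mat_diag n (\<lambda>i. 1 / d i) * mat_diag n d = 1\<^sub>m n"
    unfolding mat_diag_diag using assms by (auto intro!: eq_matI simp: mat_diag_def)
  then show "mat_diag n (\<lambda>i. 1 / d i) \<in> carrier_mat (dim_row (mat_diag n d)) (dim_row (mat_diag n d))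
      \<and> inverts_mat (mat_diag n d) (mat_diag n (\<lambda>i. 1 / d i))
      \<and> inverts_mat (mat_diag n (\<lambda>i. 1 / d i)) (mat_diag n d)"
    unfolding inverts_mat_def by simp
next
  fix B assume B: "B \<in> carrier_mat (dim_row (mat_diag n d)) (dim_row (mat_diag n d))
      \<and> inverts_mat (mat_diag n d) B \<and> inverts_mat B (mat_diag n d)"
  have "mat_diag n d * mat_diag n (\<lambda>i. 1 / d i) = 1\<^sub>m n"
    unfolding mat_diag_diag using assms by (auto intro!: eq_matI simp: mat_diag_def)
  moreover have "B \<in> carrier_mat n n" using B by simp
  ultimately have "B = B * (mat_diag n d * mat_diag n (\<lambda>i. 1 / d i))" by simp
  also have "\<dots> = (B * mat_diag n d) * mat_diag n (\<lambda>i. 1 / d i)"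
    using B by (simp add: assoc_mult_mat[of _ n n _ n _ n])
  also have "\<dots> = mat_diag n (\<lambda>i. 1 / d i)" using B unfolding inverts_mat_def by auto
  finally show "B = mat_diag n (\<lambda>i. 1 / d i)" .
qed

lemma pos_diag_inv_sqrt:
  assumes "pos_diag n A"
  obtains s where "\<And>i. i < n \<Longrightarrow> 0 < s i" "A = mat_diag n (\<lambda>i. 1 / (s i)\<^sup>2)"
    "diag_inv_sqrt A = mat_diag n s"
proof -
  obtain v where A: "A = mat_diag n v" and v: "\<forall>i<n. 0 < v i"
    using assms unfolding pos_diag_def by blast
  show thesis
  proof (rule that[of "\<lambda>i. 1 / sqrt (v i)"])
    show "A = mat_diag n (\<lambda>i. 1 / (1 / sqrt (v i))\<^sup>2)"
      unfolding A using v by (intro eq_matI) (auto simp: power_divide)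
    show "diag_inv_sqrt A = mat_diag n (\<lambda>i. 1 / sqrt (v i))"
      unfolding A by (intro eq_matI) (auto simp: diag_inv_sqrt_def)
  qed (use v in simp)
qed

lemma kron_carrier: "A \<in> carrier_mat a b \<Longrightarrow> B \<in> carrier_mat c d \<Longrightarrow> kron A B \<in> carrier_mat (a * c) (b * d)"
  unfolding kron_def by auto

lemma dim_kron [simp]:
  "dim_row (kron A B) = dim_row A * dim_row B" "dim_col (kron A B) = dim_col A * dim_col B"
  unfolding kron_def by simp_all

lemma kron_index_upper_rows:
  assumes "0 < dim_row A" "i < dim_row B" "j < dim_col A * dim_col B"
  shows "kron A B $$ (i,j) = A $$ (0, j div dim_col B) * B $$ (i, j mod dim_col B)"
proof -
  have "dim_row B \<le> dim_row A * dim_row B" using assms(1) by (cases "dim_row A") auto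
  then have "i < dim_row A * dim_row B" using assms(2) by linarith
  then show ?thesis using assms(2,3) by (simp add: kron_def)
qed

lemma kron3_rows_01_prod:
  fixes A B C :: "real mat"
  assumes "0 < dim_row A" "0 < dim_row B" "2 \<le> dim_row C"
    and j: "j < dim_col A * (dim_col B * dim_col C)"
  shows "kron A (kron B C) $$ (0,j) * kron A (kron B C) $$ (1,j) =
    (A $$ (0, j div (dim_col B * dim_col C)) * B $$ (0, j mod (dim_col B * dim_col C) div dim_col C))\<^sup>2
    * (C $$ (0, j mod dim_col C) * C $$ (1, j mod dim_col C))"
proof -
  define j' where "j' = j mod (dim_col B * dim_col C)"
  have "0 < dim_col B * dim_col C" using j by (cases "dim_col B * dim_col C") auto
  then have j': "j' < dim_col B * dim_col C" unfolding j'_def by simp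
  have "j' mod dim_col C = j mod dim_col C" unfolding j'_def by (simp add: mod_mod_cancel)
  have row: "kron A (kron B C) $$ (i,j)
      = A $$ (0, j div (dim_col B * dim_col C)) * (B $$ (0, j' div dim_col C) * C $$ (i, j mod dim_col C))"
    if "i < 2" for i
  proof -
    have "i < dim_row B * dim_row C" using that assms(2,3) by (cases "dim_row B") auto
    then have "kron A (kron B C) $$ (i,j) = A $$ (0, j div (dim_col B * dim_col C)) * kron B C $$ (i, j')"
      using assms(1) j unfolding j'_def by (simp add: kron_index_upper_rows)
    also have "kron B C $$ (i, j') = B $$ (0, j' div dim_col C) * C $$ (i, j mod dim_col C)"
      using that assms(2,3) j' \<open>j' mod dim_col C = j mod dim_col C\<close> by (simp add: kron_index_upper_rows)
    finally show ?thesis .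
  qed
  have r0: "kron A (kron B C) $$ (0,j)
      = A $$ (0, j div (dim_col B * dim_col C)) * (B $$ (0, j' div dim_col C) * C $$ (0, j mod dim_col C))"
    by (rule row) simp
  have r1: "kron A (kron B C) $$ (1,j)
      = A $$ (0, j div (dim_col B * dim_col C)) * (B $$ (0, j' div dim_col C) * C $$ (1, j mod dim_col C))"
    by (rule row) simp
  show ?thesis unfolding r0 r1 j'_def[symmetric] by (simp add: power2_eq_square ac_simps)
qed

section \<open>The discretised operators\<close>

lemma hcat_carrier: "A \<in> carrier_mat n a \<Longrightarrow> B \<in> carrier_mat n b \<Longrightarrow> hcat A B \<in> carrier_mat n (a + b)"
  unfolding hcat_def by auto

lemma hcat_index:
  "i < dim_row A \<Longrightarrow> j < dim_col A + dim_col B \<Longrightarrow>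
    hcat A B $$ (i,j) = (if j < dim_col A then A $$ (i,j) else B $$ (i, j - dim_col A))"
  unfolding hcat_def by simp

lemma dim_Wm [simp]: "dim_row (Wm p) = p" "dim_col (Wm p) = Suc p"
  unfolding Wm_def by simp_all

lemma Wm_carrier [simp]: "Wm p \<in> carrier_mat p (Suc p)"
  by (simp add: carrier_matI)

lemma transpose_Wm_rows_01_prod: "q < p \<Longrightarrow> (Wm p)\<^sup>T $$ (0,q) * (Wm p)\<^sup>T $$ (1,q) = (if q = 0 then -1 else 0)"
  by (simp add: Wm_def)

lemma Dx_carrier: "Dx nx ny nz \<in> carrier_mat ((nz+1)*((ny+1)*(nx+1))) ((nz+1)*((ny+1)*nx))"
  unfolding Dx_def by (intro uminus_carrier_mat kron_carrier one_carrier_mat) simp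

lemma Dy_carrier: "Dy nx ny nz \<in> carrier_mat ((nz+1)*((ny+1)*(nx+1))) ((nz+1)*(ny*(nx+1)))"
  unfolding Dy_def by (intro uminus_carrier_mat kron_carrier one_carrier_mat) simp

lemma Dz_carrier: "Dz nx ny nz \<in> carrier_mat ((nz+1)*((ny+1)*(nx+1))) (nz*((ny+1)*(nx+1)))"
  unfolding Dz_def by (intro uminus_carrier_mat kron_carrier one_carrier_mat) simp

definition n_edges :: "nat \<Rightarrow> nat \<Rightarrow> nat \<Rightarrow> nat" where
  "n_edges nx ny nz = (nz+1)*((ny+1)*nx) + ((nz+1)*(ny*(nx+1)) + nz*((ny+1)*(nx+1)))"

lemma Dmat_carrier: "Dmat nx ny nz \<in> carrier_mat ((nz+1)*((ny+1)*(nx+1))) (n_edges nx ny nz)"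
  unfolding Dmat_def n_edges_def by (intro hcat_carrier Dx_carrier Dy_carrier Dz_carrier)

text \<open>The only edge incident to both node \<open>0\<close> and node \<open>1\<close> is the first \<open>x\<close>-edge, which
  they bound with opposite orientations.\<close>

lemma Dx_rows_01_prod:
  assumes nx: "0 < nx" and e: "e < (nz+1)*((ny+1)*nx)"
  shows "Dx nx ny nz $$ (0,e) * Dx nx ny nz $$ (1,e) = (if e = 0 then -1 else 0)"
proof -
  define c \<alpha> \<beta> \<gamma> where "c = (ny+1)*nx" and "\<alpha> = e div c" and "\<beta> = e mod c div nx" and "\<gamma> = e mod nx"
  let ?K = "kron (1\<^sub>m (nz+1)) (kron (1\<^sub>m (ny+1)) ((Wm nx)\<^sup>T))"
  have c: "0 < c" unfolding c_def using nx by simp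
  have "\<alpha> < nz + 1" "\<beta> < ny + 1" "\<gamma> < nx"
    using e c nx unfolding \<alpha>_def \<beta>_def \<gamma>_def c_def
    by (simp_all add: less_mult_imp_div_less mult.commute)
  moreover have "?K $$ (0,e) * ?K $$ (1,e)
      = ((1\<^sub>m (nz+1) :: real mat) $$ (0, \<alpha>) * (1\<^sub>m (ny+1) :: real mat) $$ (0, \<beta>))\<^sup>2
        * ((Wm nx)\<^sup>T $$ (0, \<gamma>) * (Wm nx)\<^sup>T $$ (1, \<gamma>))"
    using kron3_rows_01_prod[of "1\<^sub>m (nz+1)" "1\<^sub>m (ny+1)" "(Wm nx)\<^sup>T" e] e nx
    unfolding \<alpha>_def \<beta>_def \<gamma>_def c_def by simp
  moreover have "(Wm nx)\<^sup>T $$ (0, \<gamma>) * (Wm nx)\<^sup>T $$ (1, \<gamma>) = (if \<gamma> = 0 then -1 else 0)"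
    using \<open>\<gamma> < nx\<close> by (rule transpose_Wm_rows_01_prod)
  ultimately have "?K $$ (0,e) * ?K $$ (1,e) = (if \<alpha> = 0 \<and> \<beta> = 0 \<and> \<gamma> = 0 then -1 else 0)"
    by simp
  moreover have "\<alpha> = 0 \<and> \<beta> = 0 \<and> \<gamma> = 0 \<longleftrightarrow> e = 0"
  proof
    assume "\<alpha> = 0 \<and> \<beta> = 0 \<and> \<gamma> = 0"
    moreover have "e mod c mod nx = e mod nx" unfolding c_def by (simp add: mod_mod_cancel)
    ultimately have "e mod c = 0"
      using div_mult_mod_eq[of "e mod c" nx] unfolding \<beta>_def \<gamma>_def by simp
    then show "e = 0" using \<open>\<alpha> = 0 \<and> \<beta> = 0 \<and> \<gamma> = 0\<close> div_mult_mod_eq[of e c] unfolding \<alpha>_def by simp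
  qed (simp add: \<alpha>_def \<beta>_def \<gamma>_def)
  moreover have "Dx nx ny nz $$ (i,e) = - ?K $$ (i,e)" if "i < 2" for i
    using Dx_carrier[of nx ny nz] e nx that unfolding Dx_def by simp
  ultimately show ?thesis by simp
qed

lemma kron3_one_rows_01_prod:
  fixes A B :: "real mat"
  assumes "0 < dim_row A" "0 < dim_row B" "2 \<le> n" "j < dim_col A * (dim_col B * n)"
  shows "kron A (kron B (1\<^sub>m n)) $$ (0,j) * kron A (kron B (1\<^sub>m n)) $$ (1,j) = 0"
  using kron3_rows_01_prod[of A B "1\<^sub>m n" j] assms by simp

lemma Dy_rows_01_prod:
  assumes "0 < nx" "e < (nz+1)*(ny*(nx+1))"
  shows "Dy nx ny nz $$ (0,e) * Dy nx ny nz $$ (1,e) = 0"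
  using kron3_one_rows_01_prod[of "1\<^sub>m (nz+1)" "(Wm ny)\<^sup>T" "nx+1" e] Dy_carrier[of nx ny nz] assms
  by (simp add: Dy_def)

lemma Dz_rows_01_prod:
  assumes "0 < nx" "e < nz*((ny+1)*(nx+1))"
  shows "Dz nx ny nz $$ (0,e) * Dz nx ny nz $$ (1,e) = 0"
  using kron3_one_rows_01_prod[of "(Wm nz)\<^sup>T" "1\<^sub>m (ny+1)" "nx+1" e] Dz_carrier[of nx ny nz] assms
  by (simp add: Dz_def)

lemma Dmat_rows_01_prod:
  assumes nx: "0 < nx" and "e < n_edges nx ny nz"
  shows "Dmat nx ny nz $$ (0,e) * Dmat nx ny nz $$ (1,e) = (if e = 0 then -1 else 0)"
proof -
  have e: "e < (nz+1)*((ny+1)*nx) + ((nz+1)*(ny*(nx+1)) + nz*((ny+1)*(nx+1)))"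
    using assms(2) unfolding n_edges_def .
  let ?cx = "(nz+1)*((ny+1)*nx)" and ?cy = "(nz+1)*(ny*(nx+1))"
  have D: "Dmat nx ny nz $$ (i,e) = (if e < ?cx then Dx nx ny nz $$ (i,e)
      else if e - ?cx < ?cy then Dy nx ny nz $$ (i, e - ?cx) else Dz nx ny nz $$ (i, e - ?cx - ?cy))"
    if "i < 2" for i
    using that e nx Dx_carrier[of nx ny nz] Dy_carrier[of nx ny nz] Dz_carrier[of nx ny nz]
      hcat_carrier[OF Dy_carrier Dz_carrier, of nx ny nz]
    unfolding Dmat_def by (auto simp: hcat_index)
  have "(0::nat) < 2" "(1::nat) < 2" by simp_all
  note D01 = D[OF this(1)] D[OF this(2)]
  consider (x) "e < ?cx" | (y) "\<not> e < ?cx" "e - ?cx < ?cy" | (z) "\<not> e < ?cx" "\<not> e - ?cx < ?cy"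
    by blast
  then show ?thesis
  proof cases
    case x
    then show ?thesis using D01 Dx_rows_01_prod[OF nx x] by simp
  next
    case y
    moreover have "e \<noteq> 0" using y(1) nx by auto
    ultimately show ?thesis using D01 Dy_rows_01_prod[OF nx y(2)] by simp
  next
    case z
    moreover have "e \<noteq> 0" using z(1) nx by auto
    moreover have "e - ?cx - ?cy < nz*((ny+1)*(nx+1))" using e z by linarith
    ultimately show ?thesis using D01 Dz_rows_01_prod[OF nx] by simp
  qed
qed

lemma pos_diag_DV:
  assumes "0 < dx" "0 < dy" "0 < dz"
  shows "pos_diag ((nx+1)*(ny+1)*(nz+1)) (DV dx dy dz nx ny nz)"
proof -
  have "pos_diag ((nz+1)*((ny+1)*(nx+1))) (DV dx dy dz nx ny nz)"
    unfolding DV_def using assms by (intro pos_diag_smult pos_diag_kron pos_diag_Itilde) simp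
  then show ?thesis by (simp add: ac_simps)
qed

lemma pos_diag_DS:
  assumes "0 < dx" "0 < dy" "0 < dz"
  shows "pos_diag (n_edges nx ny nz) (DS dx dy dz nx ny nz)"
proof -
  let ?ns = "[(nz+1)*((ny+1)*nx), (nz+1)*(ny*(nx+1)), nz*((ny+1)*(nx+1))]"
  have "list_all2 pos_diag ?ns
      [(dy*dz) \<cdot>\<^sub>m kron (Itilde (nz+1)) (kron (Itilde (ny+1)) (1\<^sub>m nx)),
       (dx*dz) \<cdot>\<^sub>m kron (Itilde (nz+1)) (kron (1\<^sub>m ny) (Itilde (nx+1))),
       (dx*dy) \<cdot>\<^sub>m kron (1\<^sub>m nz) (kron (Itilde (ny+1)) (Itilde (nx+1)))]"
    unfolding list_all2_Cons list_all2_Nil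
    by (intro conjI refl pos_diag_smult pos_diag_kron pos_diag_Itilde pos_diag_one mult_pos_pos assms)
  from pos_diag_diag_block_mat[OF this] show ?thesis unfolding DS_def n_edges_def by simp
qed

lemma pos_diag_Dl:
  assumes "0 < dx" "0 < dy" "0 < dz"
  shows "pos_diag (n_edges nx ny nz) (Dl dx dy dz nx ny nz)"
proof -
  let ?ns = "[nx*(ny+1)*(nz+1), (nx+1)*ny*(nz+1), (nx+1)*(ny+1)*nz]"
  have "list_all2 pos_diag ?ns
      [dx \<cdot>\<^sub>m 1\<^sub>m (nx*(ny+1)*(nz+1)), dy \<cdot>\<^sub>m 1\<^sub>m ((nx+1)*ny*(nz+1)), dz \<cdot>\<^sub>m 1\<^sub>m ((nx+1)*(ny+1)*nz)]"
    unfolding list_all2_Cons list_all2_Nil by (intro conjI refl pos_diag_smult pos_diag_one assms)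
  from pos_diag_diag_block_mat[OF this] have "pos_diag (sum_list ?ns) (Dl dx dy dz nx ny nz)"
    unfolding Dl_def .
  moreover have "sum_list ?ns = n_edges nx ny nz"
    by (simp add: n_edges_def algebra_simps)
  ultimately show ?thesis by (simp only:)
qed

lemma DU_eq_mat_diag:
  "DU U nx ny nz = mat_diag ((nx+1)*(ny+1)*(nz+1))
    (\<lambda>l. U (l mod (nx+1) + 1) ((l div (nx+1)) mod (ny+1) + 1) (l div ((nx+1)*(ny+1)) + 1))"
  by (rule eq_matI) (auto simp: DU_def mat_diag_def)

lemma Hmat_eq_laplacian:
  fixes nx ny nz :: nat
  assumes "0 < dx" "0 < dy" "0 < dz"
  defines "E \<equiv> n_edges nx ny nz"
  obtains g u where "\<forall>e<E. 0 < g e"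
    "Hmat hbar m dx dy dz nx ny nz U = (hbar\<^sup>2 / (2*m)) \<cdot>\<^sub>m (Dmat nx ny nz * mat_diag E g * (Dmat nx ny nz)\<^sup>T)
      + mat_diag ((nx+1)*(ny+1)*(nz+1)) u"
proof -
  obtain fs fl v where fs: "DS dx dy dz nx ny nz = mat_diag E fs" "\<forall>e<E. 0 < fs e"
    and fl: "Dl dx dy dz nx ny nz = mat_diag E fl" "\<forall>e<E. 0 < fl e"
    and v: "DV dx dy dz nx ny nz = mat_diag ((nx+1)*(ny+1)*(nz+1)) v"
    using pos_diag_DS[OF assms(1-3)] pos_diag_Dl[OF assms(1-3)] pos_diag_DV[OF assms(1-3)]
    unfolding pos_diag_def E_def by blast
  have "mat_inv (Dl dx dy dz nx ny nz) = mat_diag E (\<lambda>e. 1 / fl e)"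
    unfolding fl(1) using fl(2) by (intro mat_inv_mat_diag) (metis less_irrefl)
  moreover have "Dmat nx ny nz \<in> carrier_mat ((nz+1)*((ny+1)*(nx+1))) E"
    unfolding E_def by (rule Dmat_carrier)
  then have "Dmat nx ny nz * mat_diag E fs * mat_diag E (\<lambda>e. 1 / fl e)
      = Dmat nx ny nz * mat_diag E (\<lambda>e. fs e * (1 / fl e))"
    by (simp add: assoc_mult_mat[of _ _ E _ E _ E])
  ultimately have "Hmat hbar m dx dy dz nx ny nz U
      = (hbar\<^sup>2 / (2*m)) \<cdot>\<^sub>m (Dmat nx ny nz * mat_diag E (\<lambda>e. fs e / fl e) * (Dmat nx ny nz)\<^sup>T)
        + DV dx dy dz nx ny nz * DU U nx ny nz"
    unfolding Hmat_def fs(1) by simp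
  also have "DV dx dy dz nx ny nz * DU U nx ny nz = mat_diag ((nx+1)*(ny+1)*(nz+1))
      (\<lambda>l. v l * U (l mod (nx+1) + 1) ((l div (nx+1)) mod (ny+1) + 1) (l div ((nx+1)*(ny+1)) + 1))"
    unfolding v DU_eq_mat_diag by simp
  finally show thesis using fs(2) fl(2) by (intro that) simp_all
qed

lemma laplacian_index:
  fixes D :: "real mat"
  assumes "D \<in> carrier_mat n k" "i < n" "j < n"
  shows "(D * mat_diag k g * D\<^sup>T) $$ (i,j) = (\<Sum>e\<in>{0..<k}. D $$ (i,e) * g e * D $$ (j,e))"
  using assms by (simp add: mat_diag_mult_right[of _ n k] scalar_prod_def)

lemma laplacian_symmetric:
  fixes D :: "real mat"
  assumes D: "D \<in> carrier_mat n k"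
  shows "(D * mat_diag k g * D\<^sup>T)\<^sup>T = D * mat_diag k g * D\<^sup>T"
proof (rule eq_matI)
  fix i j assume "i < dim_row (D * mat_diag k g * D\<^sup>T)" "j < dim_col (D * mat_diag k g * D\<^sup>T)"
  then have ij: "i < n" "j < n" using D by auto
  have "(D * mat_diag k g * D\<^sup>T)\<^sup>T $$ (i,j) = (D * mat_diag k g * D\<^sup>T) $$ (j,i)"
    by (rule index_transpose_mat(1)) (use ij D in simp_all)
  also have "\<dots> = (D * mat_diag k g * D\<^sup>T) $$ (i,j)"
  proof -
    have swap: "a * b * c = c * b * a" for a b c :: real by (simp only: ac_simps)
    show ?thesis unfolding laplacian_index[OF D ij(2,1)] laplacian_index[OF D ij]
      by (intro sum.cong refl swap)
  qed
  finally show "(D * mat_diag k g * D\<^sup>T)\<^sup>T $$ (i,j) = (D * mat_diag k g * D\<^sup>T) $$ (i,j)" .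
qed auto

lemma Dmat_laplacian_index_01:
  fixes nx ny nz :: nat
  assumes nx: "0 < nx"
  defines "E \<equiv> n_edges nx ny nz"
  shows "(Dmat nx ny nz * mat_diag E g * (Dmat nx ny nz)\<^sup>T) $$ (0,1) = - g 0"
proof -
  have D: "Dmat nx ny nz \<in> carrier_mat ((nz+1)*((ny+1)*(nx+1))) E"
    unfolding E_def by (rule Dmat_carrier)
  have "(Dmat nx ny nz * mat_diag E g * (Dmat nx ny nz)\<^sup>T) $$ (0,1)
      = (\<Sum>e\<in>{0..<E}. Dmat nx ny nz $$ (0,e) * g e * Dmat nx ny nz $$ (1,e))"
    using nx by (intro laplacian_index[OF D]) simp_all
  also have "\<dots> = (\<Sum>e\<in>{0..<E}. if e = 0 then - g 0 else 0)"
  proof (intro sum.cong refl)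
    fix e assume "e \<in> {0..<E}"
    then have p: "Dmat nx ny nz $$ (0,e) * Dmat nx ny nz $$ (1,e) = (if e = 0 then -1 else 0)"
      using Dmat_rows_01_prod[OF nx] unfolding E_def by simp
    have r: "Dmat nx ny nz $$ (0,e) * g e * Dmat nx ny nz $$ (1,e)
        = g e * (Dmat nx ny nz $$ (0,e) * Dmat nx ny nz $$ (1,e))" by (simp only: ac_simps)
    show "Dmat nx ny nz $$ (0,e) * g e * Dmat nx ny nz $$ (1,e) = (if e = 0 then - g 0 else 0)"
      unfolding r p by simp
  qed
  also have "\<dots> = - g 0" using nx unfolding E_def n_edges_def by simp
  finally show ?thesis .
qed

lemma Hmat_symmetric_entry_01_nonzero:
  fixes hbar m dx dy dz :: real and nx ny nz :: nat and U :: "nat \<Rightarrow> nat \<Rightarrow> nat \<Rightarrow> real"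
  assumes "0 < hbar" "0 < m" "0 < dx" "0 < dy" "0 < dz" "0 < nx"
  defines "N \<equiv> (nx+1)*(ny+1)*(nz+1)" and "H \<equiv> Hmat hbar m dx dy dz nx ny nz U"
  shows "H \<in> carrier_mat N N" "H\<^sup>T = H" "H $$ (0,1) \<noteq> 0"
proof -
  define E where "E = n_edges nx ny nz"
  define c where "c = hbar\<^sup>2 / (2*m)"
  obtain g u where g: "\<forall>e<E. 0 < g e"
    and H: "H = c \<cdot>\<^sub>m (Dmat nx ny nz * mat_diag E g * (Dmat nx ny nz)\<^sup>T) + mat_diag N u"
    using Hmat_eq_laplacian[OF assms(3-5)] unfolding H_def N_def E_def c_def by blast
  define G where "G = Dmat nx ny nz * mat_diag E g * (Dmat nx ny nz)\<^sup>T"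
  have D: "Dmat nx ny nz \<in> carrier_mat N E" using Dmat_carrier unfolding N_def E_def by (simp add: ac_simps)
  have G: "G \<in> carrier_mat N N" "G\<^sup>T = G"
    unfolding G_def using D laplacian_symmetric[OF D] by auto
  show "H \<in> carrier_mat N N" unfolding H G_def[symmetric] using G by simp
  show "H\<^sup>T = H"
    unfolding H G_def[symmetric] using G by (intro eq_matI) (auto simp: symmetric_matD)
  have "2 \<le> N" "0 < E" using assms(6) unfolding N_def E_def n_edges_def by (simp_all add: add_mult_distrib2)
  moreover have "G $$ (0,1) = - g 0"
    unfolding G_def E_def by (rule Dmat_laplacian_index_01[OF assms(6)])
  ultimately have "H $$ (0,1) = - c * g 0"
    using carrier_matD[OF G(1)] unfolding H G_def[symmetric] by simp
  moreover have "0 < c" "0 < g 0" using assms(1,2) g \<open>0 < E\<close> unfolding c_def by simp_all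
  ultimately show "H $$ (0,1) \<noteq> 0" by simp
qed

theorem lemma1:
  fixes hbar m dx dy dz dt :: real and nx ny nz :: nat
    and U :: "nat \<Rightarrow> nat \<Rightarrow> nat \<Rightarrow> real"
  assumes "hbar > 0" "m > 0" "dx > 0" "dy > 0" "dz > 0"
    and "nx > 0" "ny > 0" "nz > 0"
    and "dt > 0"
  shows "pos_def (Pmat dt hbar m dx dy dz nx ny nz U) \<longleftrightarrow> dt < dt_CFL hbar m dx dy dz nx ny nz U"
proof -
  define N where "N = (nx+1)*(ny+1)*(nz+1)"
  define H where "H = Hmat hbar m dx dy dz nx ny nz U"
  note H = Hmat_symmetric_entry_01_nonzero[OF assms(1-6), of ny nz U, folded N_def H_def]
  obtain s where s: "\<And>i. i < N \<Longrightarrow> 0 < s i"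
    and V: "DV dx dy dz nx ny nz = mat_diag N (\<lambda>i. 1 / (s i)\<^sup>2)"
    and S: "diag_inv_sqrt (DV dx dy dz nx ny nz) = mat_diag N s"
    using pos_diag_inv_sqrt[OF pos_diag_DV[OF assms(3-5)]] unfolding N_def by blast
  define M where "M = mat_diag N s * H * mat_diag N s"
  have N: "2 \<le> N" using assms(6) unfolding N_def by (simp add: add_mult_distrib2)
  have \<rho>: "0 < spectral_radius (map_mat complex_of_real M)"
    unfolding M_def using N H(3) by (intro spectral_radius_diag_conj_pos[of N s H, OF s H(1,2)]) simp_all
  have sr: "spectral_radius (map_mat complex_of_real ((1 / hbar) \<cdot>\<^sub>m M))
      = spectral_radius (map_mat complex_of_real M) / hbar"
    unfolding map_mat_of_real_smult M_def using assms(1) N symmetric_mat_diag_conj(1)[of N s H, OF s H(1,2)]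
    by (subst spectral_radius_smult[of _ N]) (simp_all add: norm_divide)
  have "pos_def (Pmat dt hbar m dx dy dz nx ny nz U)
      \<longleftrightarrow> dt / (2 * hbar) * spectral_radius (map_mat complex_of_real M) < 1"
    unfolding Pmat_def Let_def H_def[symmetric] V M_def
    using pos_def_four_block_diag_iff[of N s H, OF s H(1,2), where k = "- (dt / (2 * hbar))"] assms(1,9) N
    by simp
  then show ?thesis
    unfolding dt_CFL_def Let_def S H_def[symmetric] M_def[symmetric] sr using \<rho> assms(1)
    by (simp add: field_simps)
qed

end
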